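(* Let $E$ be a finite set, $\mathcal{F}\subseteq 2^E$ a downward-closed family, and $f:\mathbb{R}_{\ge0}^{|E|}\to\mathbb{R}$, $f(\boldsymbol{w})=\max_{S\in\mathcal{F}}\sum_{e\in S}w_e$. Then: (1) $f$ is $1$-Lipschitz: $|f(\boldsymbol{u})-f(\boldsymbol{v})|\le\|\boldsymbol{u}-\boldsymbol{v}\|_1$ for all $\boldsymbol{u},\boldsymbol{v}\in\mathbb{R}_{\ge0}^{|E|}$; (2) $f$ is monotone: if $\boldsymbol{u}\ge\boldsymbol{v}$ coordinate-wise then $f(\boldsymbol{u})\ge f(\boldsymbol{v})$; (3) for every $\tau>0$, the function $f/\tau$ restricted to the domain $[0,\tau]^{|E|}$ is self-bounding.
   Context: A function $g:\mathcal{X}\to\mathbb{R}$ on a product space $\mathcal{X}=\mathcal{X}_1\times\dots\times\mathcal{X}_n$ is self-bounding if there exist functions $g_i:\mathcal{X}^{(i)}\to\mathbb{R}$, $i\in[n]$, where $\mathcal{X}^{(i)}$ is the product of all factors except the $i$-th and $\boldsymbol{x}^{(i)}=(x_1,\dots,x_{i-1},x_{i+1},\dots,x_n)$, such that for all $\boldsymbol{x}\in\mathcal{X}$: $0\le g(\boldsymbol{x})-g_i(\boldsymbol{x}^{(i)})\le1$ for every $i$, and $\sum_{i\in[n]}\big(g(\boldsymbol{x})-g_i(\boldsymbol{x}^{(i)})\big)\le g(\boldsymbol{x})$. A family $\mathcal{F}$ is downward-closed if $S\in\mathcal{F}$ and $T\subseteq S$ imply $T\in\mathcal{F}$. *)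

theory Defs
  imports Complex_Main "HOL-Library.FuncSet"
begin

definition maxweight :: "'a set set \<Rightarrow> ('a \<Rightarrow> real) \<Rightarrow> real" where
  "maxweight F w = Max ((\<lambda>S. \<Sum>e\<in>S. w e) ` F)"

definition downward_closed :: "'a set set \<Rightarrow> bool" where
  "downward_closed F \<longleftrightarrow> (\<forall>S T. S \<in> F \<longrightarrow> T \<subseteq> S \<longrightarrow> T \<in> F)"

text \<open>The point with the i-th coordinate removed is
  restrict x (I - {i}), an element of PiE (I - {i}) X.\<close>
definition self_bounding :: "'i set \<Rightarrow> ('i \<Rightarrow> 'b set) \<Rightarrow> (('i \<Rightarrow> 'b) \<Rightarrow> real) \<Rightarrow> bool" where
  "self_bounding I X g \<longleftrightarrow>
     (\<exists>gi :: 'i \<Rightarrow> ('i \<Rightarrow> 'b) \<Rightarrow> real.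
        \<forall>x \<in> PiE I X.
          (\<forall>i\<in>I. 0 \<le> g x - gi i (restrict x (I - {i})) \<and> g x - gi i (restrict x (I - {i})) \<le> 1)
          \<and> (\<Sum>i\<in>I. g x - gi i (restrict x (I - {i}))) \<le> g x)"

end

theory Submission
  imports Defs
begin

text \<open>Every inequality is witnessed by a maximiser S of the larger side: changing the weights
  changes the weight of S by at most their l1 distance, and by nothing negative if they increase.
  For self-boundedness take g_i(x) = f(x with x_i set to 0)/\<tau>. The decrement
  f(x) - f(x with x_i = 0) lies between 0 and x_i \<le> \<tau>, and vanishes unless i belongs to a
  maximiser S of x, so the decrements sum to at most the weight of S, which is f(x).\<close>

lemma finite_family_of_subsets: "finite E \<Longrightarrow> F \<subseteq> Pow E \<Longrightarrow> finite F"
  by (meson finite_Pow_iff finite_subset)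

lemma maxweight_ge:
  assumes "finite F" "S \<in> F"
  shows "(\<Sum>e\<in>S. w e) \<le> maxweight F w"
  unfolding maxweight_def using assms by (intro Max_ge) auto

lemma maxweight_attained:
  assumes "finite F" "F \<noteq> {}"
  obtains S where "S \<in> F" "maxweight F w = (\<Sum>e\<in>S. w e)"
proof -
  have "maxweight F w \<in> (\<lambda>S. \<Sum>e\<in>S. w e) ` F"
    unfolding maxweight_def using assms by (intro Max_in) auto
  then show ?thesis using that by auto
qed

lemma maxweight_cong:
  assumes "F \<subseteq> Pow E" "\<And>e. e \<in> E \<Longrightarrow> u e = w e"
  shows "maxweight F u = maxweight F w"
proof -
  have "(\<Sum>e\<in>S. u e) = (\<Sum>e\<in>S. w e)" if "S \<in> F" for S
    using that assms by (intro sum.cong) auto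
  then show ?thesis unfolding maxweight_def by (simp cong: image_cong)
qed

lemma maxweight_le_add_l1_dist:
  assumes "finite E" "F \<subseteq> Pow E" "F \<noteq> {}"
  shows "maxweight F u \<le> maxweight F v + (\<Sum>e\<in>E. \<bar>u e - v e\<bar>)"
proof -
  have fin: "finite F" using assms finite_family_of_subsets by blast
  obtain S where S: "S \<in> F" "maxweight F u = (\<Sum>e\<in>S. u e)"
    using maxweight_attained[OF fin assms(3)] .
  have "(\<Sum>e\<in>S. u e) = (\<Sum>e\<in>S. v e) + (\<Sum>e\<in>S. u e - v e)"
    by (simp add: sum_subtractf)
  also have "(\<Sum>e\<in>S. u e - v e) \<le> (\<Sum>e\<in>S. \<bar>u e - v e\<bar>)"
    by (intro sum_mono) auto
  also have "\<dots> \<le> (\<Sum>e\<in>E. \<bar>u e - v e\<bar>)"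
    using S(1) assms(1,2) by (intro sum_mono2) auto
  also have "(\<Sum>e\<in>S. v e) \<le> maxweight F v"
    using maxweight_ge[OF fin S(1)] .
  finally show ?thesis using S(2) by linarith
qed

lemma maxweight_lipschitz_l1:
  assumes "finite E" "F \<subseteq> Pow E" "F \<noteq> {}"
  shows "\<bar>maxweight F u - maxweight F v\<bar> \<le> (\<Sum>e\<in>E. \<bar>u e - v e\<bar>)"
  using maxweight_le_add_l1_dist[OF assms, of u v] maxweight_le_add_l1_dist[OF assms, of v u]
  by (simp add: abs_minus_commute)

lemma maxweight_mono:
  assumes "finite E" "F \<subseteq> Pow E" "F \<noteq> {}" "\<And>e. e \<in> E \<Longrightarrow> v e \<le> u e"
  shows "maxweight F v \<le> maxweight F u"
proof -
  have fin: "finite F" using assms finite_family_of_subsets by blast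
  obtain S where S: "S \<in> F" "maxweight F v = (\<Sum>e\<in>S. v e)"
    using maxweight_attained[OF fin assms(3)] .
  have "(\<Sum>e\<in>S. v e) \<le> (\<Sum>e\<in>S. u e)"
    using S(1) assms(2,4) by (intro sum_mono) auto
  also have "\<dots> \<le> maxweight F u"
    using maxweight_ge[OF fin S(1)] .
  finally show ?thesis using S(2) by simp
qed

lemma maxweight_decrement_le_maximiser:
  assumes "finite F" "S \<in> F" "finite S" "maxweight F x = (\<Sum>e\<in>S. x e)"
  shows "maxweight F x - maxweight F (x(i := 0)) \<le> (if i \<in> S then x i else 0)"
proof -
  have "(\<Sum>e\<in>S. (x(i := 0)) e) = (\<Sum>e\<in>S. x e) - (if i \<in> S then x i else 0)"
  proof (cases "i \<in> S")
    case True
    then show ?thesis using assms(3) by (simp add: sum.remove)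
  next
    case False
    then show ?thesis by (auto intro: sum.cong)
  qed
  with maxweight_ge[OF assms(1,2), of "x(i := 0)"] assms(4) show ?thesis by linarith
qed

lemma maxweight_decrement_bounds:
  assumes "finite E" "F \<subseteq> Pow E" "F \<noteq> {}" "i \<in> E" "0 \<le> x i"
  shows "0 \<le> maxweight F x - maxweight F (x(i := 0))"
    and "maxweight F x - maxweight F (x(i := 0)) \<le> x i"
proof -
  show "0 \<le> maxweight F x - maxweight F (x(i := 0))"
    using maxweight_mono[OF assms(1-3), of "x(i := 0)" x] assms(5) by simp
  have fin: "finite F" using assms finite_family_of_subsets by blast
  obtain S where S: "S \<in> F" "maxweight F x = (\<Sum>e\<in>S. x e)"
    using maxweight_attained[OF fin assms(3)] .
  have "finite S" using S(1) assms(1,2) finite_subset by blast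
  then show "maxweight F x - maxweight F (x(i := 0)) \<le> x i"
    using maxweight_decrement_le_maximiser[OF fin S(1) _ S(2), of i] assms(5)
    by (auto split: if_splits)
qed

lemma sum_maxweight_decrements_le:
  assumes "finite E" "F \<subseteq> Pow E" "F \<noteq> {}"
  shows "(\<Sum>i\<in>E. maxweight F x - maxweight F (x(i := 0))) \<le> maxweight F x"
proof -
  have fin: "finite F" using assms finite_family_of_subsets by blast
  obtain S where S: "S \<in> F" "maxweight F x = (\<Sum>e\<in>S. x e)"
    using maxweight_attained[OF fin assms(3)] .
  have SE: "S \<subseteq> E" using S(1) assms(2) by auto
  have "(\<Sum>i\<in>E. maxweight F x - maxweight F (x(i := 0))) \<le> (\<Sum>i\<in>E. if i \<in> S then x i else 0)"
    using maxweight_decrement_le_maximiser[OF fin S(1) _ S(2)] SE assms(1)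
    by (intro sum_mono) (meson finite_subset)
  also have "\<dots> = (\<Sum>i\<in>S. x i)"
    using SE assms(1) by (simp add: sum.If_cases Int_absorb1)
  finally show ?thesis using S(2) by simp
qed

lemma self_bounding_maxweight:
  assumes "finite E" "F \<subseteq> Pow E" "F \<noteq> {}" "\<tau> > 0"
  shows "self_bounding E (\<lambda>_. {0..\<tau>}) (\<lambda>w. maxweight F w / \<tau>)"
proof -
  let ?d = "\<lambda>x i. maxweight F x - maxweight F (x(i := 0))"
  have decrement: "maxweight F x / \<tau> - maxweight F ((restrict x (E - {i}))(i := 0)) / \<tau>
      = ?d x i / \<tau>" for x :: "'a \<Rightarrow> real" and i
  proof -
    have "maxweight F ((restrict x (E - {i}))(i := 0)) = maxweight F (x(i := 0))"
      using assms(2) by (intro maxweight_cong) auto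
    then show ?thesis by (simp add: diff_divide_distrib)
  qed
  have "\<forall>x \<in> PiE E (\<lambda>_. {0..\<tau>}).
      (\<forall>i\<in>E. 0 \<le> ?d x i / \<tau> \<and> ?d x i / \<tau> \<le> 1) \<and> (\<Sum>i\<in>E. ?d x i / \<tau>) \<le> maxweight F x / \<tau>"
  proof (intro ballI conjI)
    fix x i assume "x \<in> PiE E (\<lambda>_. {0..\<tau>})" "i \<in> E"
    then have "0 \<le> x i" "x i \<le> \<tau>" by auto
    with maxweight_decrement_bounds[where x = x, OF assms(1-3) \<open>i \<in> E\<close> this(1)] assms(4)
    show "0 \<le> ?d x i / \<tau>" "?d x i / \<tau> \<le> 1" by auto
  next
    fix x
    show "(\<Sum>i\<in>E. ?d x i / \<tau>) \<le> maxweight F x / \<tau>"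
      using sum_maxweight_decrements_le[OF assms(1-3), of x] assms(4)
      by (simp add: sum_divide_distrib[symmetric] divide_right_mono)
  qed
  then show ?thesis
    unfolding self_bounding_def
    by (intro exI[of _ "\<lambda>i y. maxweight F (y(i := 0)) / \<tau>"]) (simp only: decrement)
qed

theorem proposition1:
  fixes E :: "'a set" and F :: "'a set set"
  assumes "finite E" and "F \<subseteq> Pow E" and "F \<noteq> {}" and "downward_closed F"
  shows "(\<forall>u v. (\<forall>e\<in>E. u e \<ge> 0) \<longrightarrow> (\<forall>e\<in>E. v e \<ge> 0) \<longrightarrow>
            \<bar>maxweight F u - maxweight F v\<bar> \<le> (\<Sum>e\<in>E. \<bar>u e - v e\<bar>))
       \<and> (\<forall>u v. (\<forall>e\<in>E. v e \<ge> 0) \<longrightarrow> (\<forall>e\<in>E. v e \<le> u e) \<longrightarrow>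
            maxweight F v \<le> maxweight F u)
       \<and> (\<forall>\<tau>::real. \<tau> > 0 \<longrightarrow>
            self_bounding E (\<lambda>_. {0..\<tau>}) (\<lambda>w. maxweight F w / \<tau>))"
  using maxweight_lipschitz_l1[OF assms(1-3)] maxweight_mono[OF assms(1-3)]
    self_bounding_maxweight[OF assms(1-3)]
  by blast

end
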